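(* Let $G\subset\mathbb{K}[\mathbf{x}][\boldsymbol{\partial}]$ be a finite set and let $f\in\mathbb{K}[[x_1,\dots,x_n]]$ be a nonzero formal power series solution of $G$ (i.e. $P(f)=0$ for all $P\in G$) with initial exponent $\mathbf{w}$. Then $\mathbf{w}$ is a root of $\mathrm{ind}(P)$ for each $P\in G$.
   Context: $\mathbb{K}$ is a field of characteristic zero; $\mathbb{K}[\mathbf{x}][\boldsymbol{\partial}]$ is the ring of partial differential operators in $\partial_1,\dots,\partial_n$ with coefficients in $\mathbb{K}[x_1,\dots,x_n]$ ($\partial_i f=f\partial_i+\partial f/\partial x_i$), acting naturally on $\mathbb{K}[[\mathbf{x}]]$. $\prec$ is a fixed graded term order on $\mathbb{N}^n$, applied to monomials $\mathbf{x}^{\mathbf{u}}$; the initial exponent of nonzero $f$ is the $\prec$-smallest exponent occurring in $f$. Indicial polynomial: let $\delta_i=x_i\partial_i$. For nonzero $P=\sum_{|\mathbf{u}|\le m}c_{\mathbf{u}}\boldsymbol{\partial}^{\mathbf{u}}$ of order $m$ (some $c_{\mathbf{u}}\ne0$ with $|\mathbf{u}|=m$), with $\mathbf{m}=(m,\dots,m)$ write uniquely $\mathbf{x}^{\mathbf{m}}P=\sum_{\mathbf{v}\in T}\mathbf{x}^{\mathbf{v}}\big(\sum_{|\mathbf{u}|\le m}c_{\mathbf{u},\mathbf{v}}\boldsymbol{\delta}^{\mathbf{u}}\big)$ with $c_{\mathbf{u},\mathbf{v}}\in\mathbb{K}$ and nonzero inner sums; with $\mathbf{v}_0$ the $\prec$-minimal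 element of $T$, $\mathrm{ind}(P)=\sum_{|\mathbf{u}|\le m}c_{\mathbf{u},\mathbf{v}_0}\mathbf{y}^{\mathbf{u}}\in\mathbb{K}[y_1,\dots,y_n]$; $\mathrm{ind}(0)=0$. *)

theory Defs
  imports Main "HOL-Library.Function_Algebras" "HOL-Combinatorics.Stirling"
begin

text \<open>Exponent vectors in N^n are functions 'n => nat for a finite index type 'n
  (n = CARD('n)).  A formal power series in K[[x]] is its coefficient function
  ('n => nat) => 'k.\<close>

type_synonym 'n expo = "'n \<Rightarrow> nat"

definition total_deg :: "('n::finite) expo \<Rightarrow> nat" where
  "total_deg u = (\<Sum>i\<in>UNIV. u i)"

definition graded_term_order :: "(('n::finite) expo \<Rightarrow> 'n expo \<Rightarrow> bool) \<Rightarrow> bool" where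
  "graded_term_order prec \<longleftrightarrow>
     (\<forall>u. \<not> prec u u) \<and>
     (\<forall>u v w. prec u v \<longrightarrow> prec v w \<longrightarrow> prec u w) \<and>
     (\<forall>u v. u \<noteq> v \<longrightarrow> prec u v \<or> prec v u) \<and>
     (\<forall>u v w. prec u v \<longrightarrow> prec (u + w) (v + w)) \<and>
     (\<forall>u. u \<noteq> 0 \<longrightarrow> prec 0 u) \<and>
     (\<forall>u v. total_deg u < total_deg v \<longrightarrow> prec u v)"

definition init_exp :: "(('n::finite) expo \<Rightarrow> 'n expo \<Rightarrow> bool) \<Rightarrow> ('n expo \<Rightarrow> 'k::zero) \<Rightarrow> 'n expo" where
  "init_exp prec f = (THE w. f w \<noteq> 0 \<and> (\<forall>v. f v \<noteq> 0 \<longrightarrow> v \<noteq> w \<longrightarrow> prec w v))"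

text \<open>A differential operator in K[x][d] in normal form  sum c_(v,u) x^v d^u
  (coefficients to the left), given by its finitely supported coefficient map
  (v,u) |-> c_(v,u).\<close>
type_synonym ('n,'k) diffop = "'n expo \<times> 'n expo \<Rightarrow> 'k"

definition op_supp :: "('n,'k::zero) diffop \<Rightarrow> ('n expo \<times> 'n expo) set" where
  "op_supp P = {vu. P vu \<noteq> 0}"

definition is_diffop :: "('n,'k::zero) diffop \<Rightarrow> bool" where
  "is_diffop P \<longleftrightarrow> finite (op_supp P)"

text \<open>Coefficient at exponent a of d^u applied to f (natural action on K[[x]]).\<close>
definition deriv_coeff :: "('n::finite) expo \<Rightarrow> ('n expo \<Rightarrow> 'k::field_char_0) \<Rightarrow> 'n expo \<Rightarrow> 'k" where
  "deriv_coeff u f b = f (b + u) * (\<Prod>i\<in>UNIV. of_nat (fact (b i + u i) div fact (b i)))"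

definition apply_op :: "('n::finite,'k::field_char_0) diffop \<Rightarrow> ('n expo \<Rightarrow> 'k) \<Rightarrow> 'n expo \<Rightarrow> 'k" where
  "apply_op P f a = (\<Sum>(v,u)\<in>op_supp P. P (v,u) * (if v \<le> a then deriv_coeff u f (a - v) else 0))"

definition op_order :: "('n::finite,'k::zero) diffop \<Rightarrow> nat" where
  "op_order P = Max (total_deg ` snd ` op_supp P)"

text \<open>Signed Stirling numbers of the first kind: the falling factorial
  y(y-1)...(y-k+1) equals sum_j s1 k j * y^j.\<close>
definition s1 :: "nat \<Rightarrow> nat \<Rightarrow> int" where
  "s1 k j = (-1) ^ (k - j) * int (stirling k j)"

text \<open>Writing x^m P = sum_s x^s (sum_a c_(a,s) delta^a), using
  x^m x^v d^u = x^(m+v-u) (x^u d^u) and x_i^k d_i^k = delta_i(delta_i - 1)...(delta_i - k + 1):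
  the coefficient c_(a,s) of x^s delta^a.\<close>
definition delta_coeff :: "('n::finite,'k::field_char_0) diffop \<Rightarrow> 'n expo \<Rightarrow> 'n expo \<Rightarrow> 'k" where
  "delta_coeff P s a =
     (\<Sum>(v,u)\<in>op_supp P.
        if (\<lambda>_. op_order P) + v - u = s
        then P (v,u) * (\<Prod>i\<in>UNIV. of_int (s1 (u i) (a i))) else 0)"

definition shift_set :: "('n::finite,'k::field_char_0) diffop \<Rightarrow> 'n expo set" where
  "shift_set P = {s. \<exists>a. delta_coeff P s a \<noteq> 0}"

text \<open>Indicial polynomial ind(P) in K[y_1..y_n], as coefficient map a |-> coeff of y^a
  (ind(0) = 0).\<close>
definition indicial :: "(('n::finite) expo \<Rightarrow> 'n expo \<Rightarrow> bool) \<Rightarrow> ('n,'k::field_char_0) diffop \<Rightarrow> 'n expo \<Rightarrow> 'k" where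
  "indicial prec P =
     (if op_supp P = {} then (\<lambda>_. 0)
      else delta_coeff P (THE s0. s0 \<in> shift_set P \<and> (\<forall>s\<in>shift_set P. s \<noteq> s0 \<longrightarrow> prec s0 s)))"

definition mpoly_eval :: "(('n::finite) expo \<Rightarrow> 'k::comm_ring_1) \<Rightarrow> ('n \<Rightarrow> 'k) \<Rightarrow> 'k" where
  "mpoly_eval p y = (\<Sum>a\<in>{a. p a \<noteq> 0}. p a * (\<Prod>i\<in>UNIV. y i ^ a i))"

end

theory Submission
  imports Defs "HOL-Library.FuncSet"
begin

text \<open>Since x_i^k d_i^k acts on the monomial x^b by multiplication with the falling
  factorial b_i(b_i - 1)...(b_i - k + 1), writing x^m P = sum_s x^s theta_s(delta) shows that
  the coefficient of x^c in x^m P(f) is sum_s f(c - s) theta_s(c - s).  Take c = s0 + w,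
  with s0 the least shift and w the initial exponent of f.  Any other term with
  f(c - s) nonzero would give s0 < s and w < c - s, hence c < c by the compatibility of the
  term order with addition.  So f(w) ind(P)(w) = 0.\<close>

definition falling_fact :: "'a::comm_ring_1 \<Rightarrow> nat \<Rightarrow> 'a" where
  "falling_fact y k = pochhammer (y - of_nat k + 1) k"

lemma sum_s1_power_eq_falling_fact:
  "(\<Sum>j\<le>k. of_int (s1 k j) * (y::'a::comm_ring_1) ^ j) = falling_fact y k"
proof -
  have "falling_fact y k = (-1) ^ k * pochhammer (-y) k"
    by (simp add: falling_fact_def pochhammer_minus)
  also have "\<dots> = (\<Sum>j\<le>k. (-1) ^ k * (of_nat (stirling k j) * (-y) ^ j))"
    by (simp add: sum_distrib_left flip: stirling_pochhammer)
  also have "\<dots> = (\<Sum>j\<le>k. of_int (s1 k j) * y ^ j)"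
  proof (rule sum.cong)
    fix j assume "j \<in> {..k}"
    then have "(-1::'a) ^ k = (-1) ^ (k - j) * (-1) ^ j"
      by (simp flip: power_add)
    then have "(-1) ^ k * (of_nat (stirling k j) * (-y) ^ j)
        = (-1) ^ (k - j) * ((-1) ^ j * (-1) ^ j) * (of_nat (stirling k j) * y ^ j)"
      by (simp only: power_minus[of y] mult_ac)
    also have "\<dots> = of_int (s1 k j) * y ^ j"
      by (simp add: s1_def flip: power_mult_distrib)
    finally show "(-1) ^ k * (of_nat (stirling k j) * (-y) ^ j) = of_int (s1 k j) * y ^ j" .
  qed simp
  finally show ?thesis by simp
qed

lemma of_nat_fact_div_fact_eq_falling_fact:
  "of_nat (fact (b + k) div fact b) = (falling_fact (of_nat (b + k)) k :: 'a::comm_ring_1)"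
proof -
  have "(fact (b + k) :: nat) = fact b * pochhammer (b + 1) k"
    by (simp add: pochhammer_fact pochhammer_product' add.commute)
  then have "fact (b + k) div fact b = pochhammer (b + 1) k" by simp
  then show ?thesis
    by (simp add: falling_fact_def pochhammer_of_nat[symmetric] add.commute)
qed

lemma falling_fact_of_nat_eq_0:
  "y < k \<Longrightarrow> falling_fact (of_nat y :: 'a::field_char_0) k = 0"
  unfolding falling_fact_def pochhammer_eq_0_iff
  by (rule exI[of _ "k - 1 - y"]) (simp add: of_nat_diff algebra_simps)

lemma prod_falling_fact_eq_0:
  "y i < k i \<Longrightarrow> (\<Prod>j\<in>UNIV. falling_fact (of_nat (y j) :: 'a::field_char_0) (k j)) = 0"
  for y k :: "('n::finite) expo"
  by (meson UNIV_I falling_fact_of_nat_eq_0 finite prod_zero_iff)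

lemma sum_PiE_s1_eq_prod_falling_fact:
  fixes k :: "('n::finite) expo" and y :: "'n \<Rightarrow> 'a::comm_ring_1"
  assumes "\<And>i. k i \<le> K"
  shows "(\<Sum>a\<in>PiE UNIV (\<lambda>_. {..K}). \<Prod>i\<in>UNIV. of_int (s1 (k i) (a i)) * y i ^ a i)
    = (\<Prod>i\<in>UNIV. falling_fact (y i) (k i))"
proof -
  have "(\<Sum>a\<in>PiE UNIV (\<lambda>_. {..K}). \<Prod>i\<in>UNIV. of_int (s1 (k i) (a i)) * y i ^ a i)
      = (\<Prod>i\<in>UNIV. \<Sum>j\<le>K. of_int (s1 (k i) j) * y i ^ j)"
    by (rule prod_sum_PiE[symmetric]) auto
  also have "\<dots> = (\<Prod>i\<in>UNIV. \<Sum>j\<le>k i. of_int (s1 (k i) j) * y i ^ j)"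
    using assms by (intro prod.cong refl sum.mono_neutral_right) (auto simp: s1_def)
  finally show ?thesis by (simp add: sum_s1_power_eq_falling_fact)
qed

lemma mpoly_eval_eq_sum_superset:
  assumes "finite B" "{a. p a \<noteq> 0} \<subseteq> B"
  shows "mpoly_eval p y = (\<Sum>a\<in>B. p a * (\<Prod>i\<in>UNIV. y i ^ a i))"
  unfolding mpoly_eval_def using assms by (intro sum.mono_neutral_left) auto

lemma member_le_total_deg: "u i \<le> total_deg u"
  unfolding total_deg_def by (rule member_le_sum) auto

lemma op_supp_le_op_order:
  assumes "is_diffop P" "(v, u) \<in> op_supp P"
  shows "u i \<le> op_order P"
proof -
  have "total_deg u \<le> op_order P"
    using assms unfolding op_order_def is_diffop_def
    by (intro Max_ge) (auto simp: image_iff intro!: bexI[of _ "(v, u)"])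
  then show ?thesis using member_le_total_deg le_trans by blast
qed

text \<open>The exponent s in x^m x^v d^u = x^s (x^u d^u), where m is the order of P.\<close>
definition op_shift :: "('n::finite, 'k::zero) diffop \<Rightarrow> 'n expo \<times> 'n expo \<Rightarrow> 'n expo" where
  "op_shift P vu = (\<lambda>_. op_order P) + fst vu - snd vu"

lemma delta_coeff_nonzeroE:
  fixes P :: "('n::finite, 'k::field_char_0) diffop"
  assumes "delta_coeff P s a \<noteq> 0"
  obtains v u where "(v, u) \<in> op_supp P" "op_shift P (v, u) = s" "\<And>i. a i \<le> u i"
proof -
  obtain vu where "vu \<in> op_supp P" and "(case vu of (v, u) \<Rightarrow>
      if (\<lambda>_. op_order P) + v - u = s
      then P (v, u) * (\<Prod>i\<in>UNIV. of_int (s1 (u i) (a i))) else 0) \<noteq> 0"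
    using assms unfolding delta_coeff_def by (meson sum.not_neutral_contains_not_neutral)
  moreover obtain v u where "vu = (v, u)" by (cases vu)
  ultimately have "(v, u) \<in> op_supp P" "op_shift P (v, u) = s" "s1 (u i) (a i) \<noteq> 0" for i
    by (auto simp: op_shift_def split: if_splits)
  moreover have "a i \<le> u i" if "s1 (u i) (a i) \<noteq> 0" for i
    using that by (cases "a i \<le> u i") (auto simp: s1_def)
  ultimately show thesis using that by blast
qed

lemma shift_set_subset: "shift_set P \<subseteq> op_shift P ` op_supp P"
  by (auto simp: shift_set_def elim!: delta_coeff_nonzeroE)

lemma mpoly_eval_delta_coeff:
  fixes P :: "('n::finite, 'k::field_char_0) diffop"
  assumes P: "is_diffop P"
  shows "mpoly_eval (delta_coeff P s) (\<lambda>i. of_nat (y i)) =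
    (\<Sum>(v, u)\<in>op_supp P. if op_shift P (v, u) = s
       then P (v, u) * (\<Prod>i\<in>UNIV. falling_fact (of_nat (y i)) (u i)) else 0)"
proof -
  define B where "B = PiE (UNIV::'n set) (\<lambda>_. {..op_order P})"
  have "{a. delta_coeff P s a \<noteq> 0} \<subseteq> B"
    unfolding B_def
    by (auto elim!: delta_coeff_nonzeroE intro: le_trans op_supp_le_op_order[OF P])
  then have "mpoly_eval (delta_coeff P s) (\<lambda>i. of_nat (y i)) =
      (\<Sum>a\<in>B. delta_coeff P s a * (\<Prod>i\<in>UNIV. (of_nat (y i) :: 'k) ^ a i))"
    by (intro mpoly_eval_eq_sum_superset) (auto simp: B_def intro: finite_PiE)
  also have "\<dots> = (\<Sum>(v, u)\<in>op_supp P. \<Sum>a\<in>B. if op_shift P (v, u) = s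
      then P (v, u) * (\<Prod>i\<in>UNIV. of_int (s1 (u i) (a i)) * (of_nat (y i) :: 'k) ^ a i) else 0)"
    unfolding delta_coeff_def op_shift_def sum_distrib_right
    by (subst sum.swap) (auto simp: prod.distrib mult.assoc intro!: sum.cong)
  also have "\<dots> = (\<Sum>(v, u)\<in>op_supp P. if op_shift P (v, u) = s
      then P (v, u) * (\<Prod>i\<in>UNIV. falling_fact (of_nat (y i)) (u i)) else 0)"
    unfolding B_def
    by (intro sum.cong refl)
       (auto simp: sum_distrib_left[symmetric] sum_PiE_s1_eq_prod_falling_fact op_supp_le_op_order[OF P])
  finally show ?thesis .
qed

lemma add_le_iff_le_diff_fun: "a + b \<le> c \<longleftrightarrow> a \<le> c \<and> b \<le> c - a"
  for a b c :: "'n \<Rightarrow> nat"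
proof -
  have "a i + b i \<le> c i \<longleftrightarrow> a i \<le> c i \<and> b i \<le> c i - a i" for i by arith
  then show ?thesis by (simp add: le_fun_def all_conj_distrib)
qed

lemma deriv_coeff_eq_falling_fact:
  "deriv_coeff u f b = f (b + u) * (\<Prod>i\<in>UNIV. falling_fact (of_nat ((b + u) i)) (u i))"
  by (simp add: deriv_coeff_def of_nat_fact_div_fact_eq_falling_fact)

lemma deriv_coeff_shifted:
  fixes u v c :: "('n::finite) expo" and f :: "'n expo \<Rightarrow> 'k::field_char_0"
  assumes u: "\<And>i. u i \<le> m"
  defines "s \<equiv> (\<lambda>_. m) + v - u"
  shows "(if (\<lambda>_. m) + v \<le> c then deriv_coeff u f (c - (\<lambda>_. m) - v) else 0) =
    (if s \<le> c then f (c - s) * (\<Prod>i\<in>UNIV. falling_fact (of_nat ((c - s) i)) (u i)) else 0)"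
proof (cases "(\<lambda>_. m) + v \<le> c")
  case True
  then have mv: "m + v i \<le> c i" for i by (simp add: le_fun_def)
  have "(c - (\<lambda>_. m) - v + u) i = (c - s) i" "s i \<le> c i" for i
    using u[of i] mv[of i] by (simp_all add: s_def)
  then have "c - (\<lambda>_. m) - v + u = c - s" "s \<le> c"
    by (simp_all add: le_fun_def fun_eq_iff)
  then show ?thesis
    using True unfolding deriv_coeff_eq_falling_fact by simp
next
  case False
  then obtain i where "c i < m + v i" by (auto simp: le_fun_def not_le)
  moreover have "s \<le> c \<Longrightarrow> s i \<le> c i" by (simp add: le_fun_def)
  ultimately have "s \<le> c \<Longrightarrow> (c - s) i < u i"
    using u[of i] by (simp add: s_def)
  then have "s \<le> c \<Longrightarrow> (\<Prod>j\<in>UNIV. falling_fact (of_nat ((c - s) j) :: 'k) (u j)) = 0"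
    by (rule prod_falling_fact_eq_0)
  then show ?thesis
    using False by simp
qed

text \<open>The left-hand side is the coefficient of x^c in x^m P(f).\<close>
lemma apply_op_eq_sum_shifts:
  fixes P :: "('n::finite, 'k::field_char_0) diffop"
  assumes P: "is_diffop P"
  defines "m \<equiv> (\<lambda>_::'n. op_order P)"
  shows "(if m \<le> c then apply_op P f (c - m) else 0) =
    (\<Sum>s\<in>op_shift P ` op_supp P. if s \<le> c
       then f (c - s) * mpoly_eval (delta_coeff P s) (\<lambda>i. of_nat ((c - s) i)) else 0)"
proof -
  define g where "g s u = (if s \<le> c
    then f (c - s) * (\<Prod>i\<in>UNIV. falling_fact (of_nat ((c - s) i)) (u i)) else 0)" for s u
  have fin: "finite (op_supp P)" using P by (simp add: is_diffop_def)
  have "(if m \<le> c then apply_op P f (c - m) else 0)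
      = (\<Sum>(v, u)\<in>op_supp P. P (v, u) * (if m + v \<le> c then deriv_coeff u f (c - m - v) else 0))"
    unfolding apply_op_def by (auto simp: add_le_iff_le_diff_fun intro!: sum.cong sum.neutral)
  also have "\<dots> = (\<Sum>vu\<in>op_supp P. P vu * g (op_shift P vu) (snd vu))"
    unfolding m_def g_def op_shift_def
    by (intro sum.cong refl) (auto simp: deriv_coeff_shifted op_supp_le_op_order[OF P])
  also have "\<dots> = (\<Sum>s\<in>op_shift P ` op_supp P. \<Sum>vu\<in>op_supp P.
      if op_shift P vu = s then P vu * g s (snd vu) else 0)"
    by (subst sum.image_gen[OF fin]) (auto simp: sum.inter_filter[OF fin] intro!: sum.cong)
  also have "\<dots> = (\<Sum>s\<in>op_shift P ` op_supp P. if s \<le> c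
       then f (c - s) * mpoly_eval (delta_coeff P s) (\<lambda>i. of_nat ((c - s) i)) else 0)"
  proof (rule sum.cong)
    fix s
    show "(\<Sum>vu\<in>op_supp P. if op_shift P vu = s then P vu * g s (snd vu) else 0) =
      (if s \<le> c then f (c - s) * mpoly_eval (delta_coeff P s) (\<lambda>i. of_nat ((c - s) i)) else 0)"
      unfolding g_def mpoly_eval_delta_coeff[OF P]
      by (cases "s \<le> c") (simp_all add: sum_distrib_left split_beta mult_ac if_distrib cong: if_cong)
  qed simp
  finally show ?thesis .
qed

lemma graded_term_order_finite_has_least:
  assumes prec: "graded_term_order prec" and "finite X" "X \<noteq> {}"
  shows "\<exists>x\<in>X. \<forall>y\<in>X. y \<noteq> x \<longrightarrow> prec x y"
  using assms(2,3)
proof (induction X rule: finite_ne_induct)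
  case (singleton x)
  then show ?case by auto
next
  case (insert x F)
  then obtain m where m: "m \<in> F" "\<forall>y\<in>F. y \<noteq> m \<longrightarrow> prec m y" by blast
  have trans: "\<And>a b c. prec a b \<Longrightarrow> prec b c \<Longrightarrow> prec a c"
    and total: "\<And>a b. a \<noteq> b \<Longrightarrow> prec a b \<or> prec b a"
    using prec unfolding graded_term_order_def by blast+
  show ?case
  proof (cases "prec x m")
    case True
    then show ?thesis using m trans by (intro bexI[of _ x]) auto
  next
    case False
    then have "prec m x" using total m insert.hyps by metis
    then show ?thesis using m by (intro bexI[of _ m]) auto
  qed
qed

text \<open>Grading makes the order a well-order: the elements of least total degree form a
  finite set.\<close>
lemma graded_term_order_has_least:
  fixes X :: "('n::finite) expo set"
  assumes prec: "graded_term_order prec" and "X \<noteq> {}"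
  shows "\<exists>x\<in>X. \<forall>y\<in>X. y \<noteq> x \<longrightarrow> prec x y"
proof -
  define d where "d = (LEAST d. \<exists>v\<in>X. total_deg v = d)"
  obtain v0 where "v0 \<in> X" using \<open>X \<noteq> {}\<close> by blast
  then have "\<exists>v\<in>X. total_deg v = d"
    unfolding d_def using LeastI[of "\<lambda>d. \<exists>v\<in>X. total_deg v = d" "total_deg v0"] by blast
  then have ne: "{v\<in>X. total_deg v = d} \<noteq> {}" by blast
  have d_le: "d \<le> total_deg v" if "v \<in> X" for v
    unfolding d_def using that by (auto intro: Least_le)
  have "{v\<in>X. total_deg v = d} \<subseteq> PiE UNIV (\<lambda>_. {..d})"
    using member_le_total_deg by fastforce
  then have "finite {v\<in>X. total_deg v = d}"
    by (rule finite_subset) (auto intro: finite_PiE)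
  then obtain x where x: "x \<in> X" "total_deg x = d"
    and least: "\<forall>y\<in>{v\<in>X. total_deg v = d}. y \<noteq> x \<longrightarrow> prec x y"
    using graded_term_order_finite_has_least[OF prec _ ne] by blast
  have "prec x y" if "y \<in> X" "y \<noteq> x" for y
  proof (cases "total_deg y = d")
    case True
    then show ?thesis using least that by blast
  next
    case False
    then have "total_deg x < total_deg y" using d_le[OF \<open>y \<in> X\<close>] x by simp
    then show ?thesis using prec unfolding graded_term_order_def by blast
  qed
  then show ?thesis using x by blast
qed

lemma graded_term_order_the_least:
  assumes prec: "graded_term_order prec" and "x \<in> X" "\<forall>y\<in>X. y \<noteq> x \<longrightarrow> prec x y"
  shows "(THE x. x \<in> X \<and> (\<forall>y\<in>X. y \<noteq> x \<longrightarrow> prec x y)) = x"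
proof -
  have irrefl: "\<And>a. \<not> prec a a" and trans: "\<And>a b c. prec a b \<Longrightarrow> prec b c \<Longrightarrow> prec a c"
    using prec unfolding graded_term_order_def by blast+
  show ?thesis
  proof (rule the_equality)
    fix y assume "y \<in> X \<and> (\<forall>z\<in>X. z \<noteq> y \<longrightarrow> prec y z)"
    then show "y = x" using assms(2,3) irrefl trans by metis
  qed (use assms(2,3) in blast)
qed

lemma init_exp_least:
  fixes f :: "('n::finite) expo \<Rightarrow> 'k::zero"
  assumes prec: "graded_term_order prec" and "f \<noteq> (\<lambda>_. 0)"
  shows "f (init_exp prec f) \<noteq> 0"
    and "\<And>v. f v \<noteq> 0 \<Longrightarrow> v \<noteq> init_exp prec f \<Longrightarrow> prec (init_exp prec f) v"
proof -
  have "{v. f v \<noteq> 0} \<noteq> {}" using assms(2) by auto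
  from graded_term_order_has_least[OF prec this] obtain w
    where w: "w \<in> {v. f v \<noteq> 0}" "\<forall>v\<in>{v. f v \<noteq> 0}. v \<noteq> w \<longrightarrow> prec w v" ..
  moreover have "init_exp prec f = w"
    using graded_term_order_the_least[OF prec w] unfolding init_exp_def by simp
  ultimately show "f (init_exp prec f) \<noteq> 0"
    and "\<And>v. f v \<noteq> 0 \<Longrightarrow> v \<noteq> init_exp prec f \<Longrightarrow> prec (init_exp prec f) v"
    by auto
qed

lemma indicial_eq_delta_coeff_least_shift:
  assumes prec: "graded_term_order prec" and "s0 \<in> shift_set P"
    and "\<forall>s\<in>shift_set P. s \<noteq> s0 \<longrightarrow> prec s0 s"
  shows "indicial prec P = delta_coeff P s0"
proof -
  have "op_supp P \<noteq> {}" using assms(2) shift_set_subset by blast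
  then show ?thesis
    unfolding indicial_def using graded_term_order_the_least[OF prec assms(2,3)] by simp
qed

lemma mpoly_eval_delta_coeff_not_shift:
  "s \<notin> shift_set P \<Longrightarrow> mpoly_eval (delta_coeff P s) y = 0"
  by (simp add: shift_set_def mpoly_eval_def)

lemma indicial_eq_0_if_no_shift:
  assumes "shift_set P = {}"
  shows "indicial prec P = (\<lambda>_. 0)"
proof -
  have "delta_coeff P s = (\<lambda>_. 0)" for s
    using assms by (auto simp: shift_set_def)
  then show ?thesis by (simp add: indicial_def)
qed

lemma graded_term_order_add_least_unique:
  assumes prec: "graded_term_order prec"
    and s0: "\<forall>s\<in>S. s \<noteq> s0 \<longrightarrow> prec s0 s" and w: "\<forall>v\<in>V. v \<noteq> w \<longrightarrow> prec w v"
    and "s \<in> S" "v \<in> V" "s + v = s0 + w"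
  shows "s = s0 \<and> v = w"
proof -
  have irrefl: "\<And>a. \<not> prec a a" and trans: "\<And>a b c. prec a b \<Longrightarrow> prec b c \<Longrightarrow> prec a c"
    and mono: "\<And>a b c. prec a b \<Longrightarrow> prec (a + c) (b + c)"
    using prec unfolding graded_term_order_def by blast+
  have "prec (s0 + w) (s + v)" if "s \<noteq> s0 \<or> v \<noteq> w"
  proof -
    have "prec (s0 + w) (s + w) \<or> s0 = s" using mono s0 \<open>s \<in> S\<close> by (cases "s = s0") auto
    moreover have "prec (s + w) (s + v) \<or> w = v"
      using mono[of w v s] w \<open>v \<in> V\<close> by (auto simp: add.commute)
    ultimately show ?thesis using that trans by blast
  qed
  then show ?thesis using irrefl \<open>s + v = s0 + w\<close> by metis
qed

lemma indicial_root_init_exp: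
  fixes P :: "('n::finite, 'k::field_char_0) diffop" and f :: "'n expo \<Rightarrow> 'k"
  assumes prec: "graded_term_order prec" and P: "is_diffop P"
    and f: "f \<noteq> (\<lambda>_. 0)" and sol: "apply_op P f = (\<lambda>_. 0)"
  shows "mpoly_eval (indicial prec P) (\<lambda>i. of_nat (init_exp prec f i)) = 0"
proof (cases "shift_set P = {}")
  case True
  then show ?thesis by (simp add: indicial_eq_0_if_no_shift mpoly_eval_def)
next
  case False
  from graded_term_order_has_least[OF prec this] obtain s0
    where s0: "s0 \<in> shift_set P" "\<forall>s\<in>shift_set P. s \<noteq> s0 \<longrightarrow> prec s0 s" ..
  define w where "w = init_exp prec f"
  have w: "f w \<noteq> 0" "\<forall>v\<in>{v. f v \<noteq> 0}. v \<noteq> w \<longrightarrow> prec w v"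
    using init_exp_least[OF prec f] by (auto simp: w_def)
  define E where "E s = (if s \<le> s0 + w
    then f (s0 + w - s) * mpoly_eval (delta_coeff P s) (\<lambda>i. of_nat ((s0 + w - s) i)) else 0)" for s
  have E_other: "E s = 0" if "s \<noteq> s0" for s
  proof (cases "s \<le> s0 + w \<and> s \<in> shift_set P \<and> f (s0 + w - s) \<noteq> 0")
    case True
    then have "s + (s0 + w - s) = s0 + w" by (auto simp: le_fun_def fun_eq_iff)
    then have "s = s0"
      using graded_term_order_add_least_unique[OF prec s0(2) w(2)] True by blast
    with that show ?thesis by blast
  next
    case False
    then show ?thesis by (auto simp: E_def mpoly_eval_delta_coeff_not_shift)
  qed
  have fin: "finite (op_shift P ` op_supp P)" using P by (simp add: is_diffop_def)
  have "s0 \<in> op_shift P ` op_supp P" using s0(1) shift_set_subset by blast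
  have "0 = (\<Sum>s\<in>op_shift P ` op_supp P. E s)"
    using apply_op_eq_sum_shifts[OF P, of "s0 + w" f] unfolding E_def sol by (metis (lifting))
  also have "\<dots> = E s0"
    using E_other \<open>s0 \<in> op_shift P ` op_supp P\<close> by (simp add: sum.remove[OF fin])
  also have "\<dots> = f w * mpoly_eval (indicial prec P) (\<lambda>i. of_nat (w i))"
    by (simp add: E_def le_fun_def indicial_eq_delta_coeff_least_shift[OF prec s0])
  finally show ?thesis using w(1) by (simp add: w_def)
qed

theorem mainTheorem8:
  fixes prec :: "('n::finite) expo \<Rightarrow> 'n expo \<Rightarrow> bool"
    and G :: "('n, 'k::field_char_0) diffop set"
    and f :: "'n expo \<Rightarrow> 'k"
  assumes "graded_term_order prec"
    and "finite G"
    and "\<forall>P\<in>G. is_diffop P"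
    and "f \<noteq> (\<lambda>_. 0)"
    and "\<forall>P\<in>G. apply_op P f = (\<lambda>_. 0)"
  shows "\<forall>P\<in>G. mpoly_eval (indicial prec P) (\<lambda>i. of_nat (init_exp prec f i)) = 0"
  using assms(1,3-5) indicial_root_init_exp by blast

end
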